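(* For every single-item auction setting with $n$ bidders, binary signals and interdependent SOS valuations, there exists an ex post IC-IR randomized mechanism that achieves a $2$-approximation to the optimal welfare; that is, there is an ex post IC-IR mechanism $M=(x,p)$ such that for every signal profile $s\in\{0,1\}^n$, $$\sum_{i=1}^n x_i(s)\,v_i(s)\;\ge\;\tfrac12\max_{i\in[n]} v_i(s).$$
   Context: Single-item auction with bidders $[n]$. Each bidder $i$ has a private binary signal $s_i\in\{0,1\}$; a signal profile $s=(s_1,\dots,s_n)$ is identified with the set $S=\{i: s_i=1\}\subseteq[n]$. Each bidder $i$ has a publicly known valuation $v_i:2^{[n]}\to\mathbb{R}_{\ge0}$ (its value for the item given the set of high signals), which is weakly increasing (monotone: $S\subseteq T\Rightarrow v_i(S)\le v_i(T)$) and strictly increasing in its own signal ($v_i(S\cup\{i\})>v_i(S)$ for $i\notin S$). Valuations are SOS (submodular over signals) if each $v_i$ is a submodular set function: for all $S\subseteq T\subseteq[n]$ and $\ell\in[n]\setminus T$, $v_i(S\cup\{\ell\})-v_i(S)\ge v_i(T\cup\{\ell\})-v_i(T)$. A randomized mechanism $M=(x,p)$ maps each reported signal profile $s$ to allocation probabilities $x(s)=(x_1(s),\dots,x_n(s))$ with $x_i(s)\ge0$ and $\sum_i x_i(s)\le1$ (feasibility), and expected payments $p(s)=(p_1(s),\dots,p_n(s))$. $M$ is ex post IC-IR if for every bidder $i$, every true profile $s$ and every report $s_i'$, the quantity $x_i(s_{-i},s_i')v_i(s)-p_i(s_{-i},s_i')$ is nonnegative when $s_i'=s_i$ and is maximized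 over $s_i'$ at $s_i'=s_i$. *)

theory Defs
  imports "HOL-Analysis.Analysis"
begin

text \<open>Bidders are 0..<n. A signal profile is identified with the set S of bidders
 with high signal, S \<subseteq> {..<n}. Valuations v i S, allocations x S i, payments p S i.\<close>

definition monotone_val :: "nat \<Rightarrow> (nat set \<Rightarrow> real) \<Rightarrow> bool" where
  "monotone_val n f \<longleftrightarrow> (\<forall>S T. S \<subseteq> T \<longrightarrow> T \<subseteq> {..<n} \<longrightarrow> f S \<le> f T)"

definition submodular_val :: "nat \<Rightarrow> (nat set \<Rightarrow> real) \<Rightarrow> bool" where
  "submodular_val n f \<longleftrightarrow> (\<forall>S T l. S \<subseteq> T \<longrightarrow> T \<subseteq> {..<n} \<longrightarrow> l < n \<longrightarrow> l \<notin> T \<longrightarrow>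
      f (insert l S) - f S \<ge> f (insert l T) - f T)"

definition valid_SOS :: "nat \<Rightarrow> (nat \<Rightarrow> nat set \<Rightarrow> real) \<Rightarrow> bool" where
  "valid_SOS n v \<longleftrightarrow> (\<forall>i<n.
      (\<forall>S. S \<subseteq> {..<n} \<longrightarrow> v i S \<ge> 0)
    \<and> monotone_val n (v i)
    \<and> (\<forall>S. S \<subseteq> {..<n} \<longrightarrow> i \<notin> S \<longrightarrow> v i (insert i S) > v i S)
    \<and> submodular_val n (v i))"

definition set_report :: "nat set \<Rightarrow> nat \<Rightarrow> bool \<Rightarrow> nat set" where
  "set_report S i b = (if b then insert i S else S - {i})"

definition feasible :: "nat \<Rightarrow> (nat set \<Rightarrow> nat \<Rightarrow> real) \<Rightarrow> bool" where
  "feasible n x \<longleftrightarrow> (\<forall>S. S \<subseteq> {..<n} \<longrightarrow>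
      (\<forall>i<n. x S i \<ge> 0) \<and> (\<Sum>i<n. x S i) \<le> 1)"

definition expost_IC_IR :: "nat \<Rightarrow> (nat \<Rightarrow> nat set \<Rightarrow> real) \<Rightarrow>
    (nat set \<Rightarrow> nat \<Rightarrow> real) \<Rightarrow> (nat set \<Rightarrow> nat \<Rightarrow> real) \<Rightarrow> bool" where
  "expost_IC_IR n v x p \<longleftrightarrow> (\<forall>i<n. \<forall>S. S \<subseteq> {..<n} \<longrightarrow>
      x S i * v i S - p S i \<ge> 0
    \<and> (\<forall>b. x (set_report S i b) i * v i S - p (set_report S i b) i \<le> x S i * v i S - p S i))"

end

theory Submission
  imports Defs
begin

text \<open>Charging bidder i the amount x_i(S) v_i(S - {i}) leaves it the utility
  x_i(S) (v_i(S) - v_i(S - {i})), so every allocation that is monotone in each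
  bidder's own signal is ex post IC-IR. The allocation gives half of the item to the best low
  bidder when its value beats a threshold made of high values, half to every high bidder that
  would receive that half after lowering its own signal (the promoted bidders, which make the
  allocation monotone), and the rest to the best high bidder. Submodularity allows at most two
  promoted bidders, so the shares are feasible, and in each case the served bidders carry at
  least half of the largest value.\<close>

lemma arg_max_on_finite:
  fixes f :: "'a \<Rightarrow> 'b::linorder"
  assumes "finite S" "S \<noteq> {}"
  shows "arg_max_on f S \<in> S \<and> (\<forall>y\<in>S. f y \<le> f (arg_max_on f S))"
proof -
  have "Max (f ` S) \<in> f ` S"
    using assms by simp
  then obtain k where k: "k \<in> S" "f k = Max (f ` S)"
    by auto
  then have "\<forall>y\<in>S. f y \<le> f k"
    using assms by simp
  then show ?thesis
    unfolding arg_max_on_def using k(1)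
    by (intro arg_maxI[where P = "\<lambda>x. x \<in> S" and f = f
          and Q = "\<lambda>a. a \<in> S \<and> (\<forall>y\<in>S. f y \<le> f a)"]) (auto simp: not_less)
qed

lemma expost_IC_IR_threshold_payment:
  fixes x :: "nat set \<Rightarrow> nat \<Rightarrow> real"
  assumes mono: "\<forall>i<n. monotone_val n (v i)"
    and nonneg: "\<And>S i. S \<subseteq> {..<n} \<Longrightarrow> i < n \<Longrightarrow> 0 \<le> x S i"
    and alloc_mono: "\<And>S i. S \<subseteq> {..<n} \<Longrightarrow> i \<in> S \<Longrightarrow> x (S - {i}) i \<le> x S i"
  shows "expost_IC_IR n v x (\<lambda>S i. x S i * v i (S - {i}))"
  unfolding expost_IC_IR_def
proof (intro allI impI conjI)
  fix i S b assume i: "i < n" and S: "S \<subseteq> {..<n}"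
  define gain where "gain = v i S - v i (S - {i})"
  have gain_nonneg: "0 \<le> gain"
    using mono i S unfolding gain_def monotone_val_def by auto
  have utility: "x R i * v i S - x R i * v i (R - {i}) = x R i * gain"
    if "R - {i} = S - {i}" for R
    using that unfolding gain_def by (simp add: algebra_simps)
  show "0 \<le> x S i * v i S - x S i * v i (S - {i})"
    using utility[of S] nonneg[OF S i] gain_nonneg by simp
  have "x (set_report S i b) i * gain \<le> x S i * gain"
  proof (cases "i \<in> S \<and> \<not> b")
    case True
    then have "set_report S i b = S - {i}"
      unfolding set_report_def by simp
    then show ?thesis
      using alloc_mono[OF S] True gain_nonneg by (simp add: mult_right_mono)
  next
    case False
    then consider "set_report S i b = S" | "i \<notin> S"
      unfolding set_report_def by (cases b) auto
    then show ?thesis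
    proof cases
      case 2
      then have "gain = 0"
        unfolding gain_def by simp
      then show ?thesis
        by simp
    qed simp
  qed
  moreover have "set_report S i b - {i} = S - {i}"
    unfolding set_report_def by auto
  ultimately show "x (set_report S i b) i * v i S - x (set_report S i b) i * v i (set_report S i b - {i})
      \<le> x S i * v i S - x S i * v i (S - {i})"
    using utility[of S] utility[of "set_report S i b"] by simp
qed

locale SOS_auction =
  fixes n :: nat and v :: "nat \<Rightarrow> nat set \<Rightarrow> real"
  assumes SOS: "valid_SOS n v"
begin

lemma val_nonneg: "i < n \<Longrightarrow> S \<subseteq> {..<n} \<Longrightarrow> 0 \<le> v i S"
  using SOS by (simp add: valid_SOS_def)

lemma val_monotone: "i < n \<Longrightarrow> monotone_val n (v i)"
  using SOS by (simp add: valid_SOS_def)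

lemma val_mono: "i < n \<Longrightarrow> S \<subseteq> T \<Longrightarrow> T \<subseteq> {..<n} \<Longrightarrow> v i S \<le> v i T"
  using val_monotone unfolding monotone_val_def by blast

lemma val_marginal_antimono:
  "i < n \<Longrightarrow> S \<subseteq> T \<Longrightarrow> T \<subseteq> {..<n} \<Longrightarrow> l < n \<Longrightarrow> l \<notin> T \<Longrightarrow>
   v i (insert l T) - v i T \<le> v i (insert l S) - v i S"
  using SOS unfolding valid_SOS_def submodular_val_def by blast

lemma val_le_two_removals:
  assumes "i < n" "T \<subseteq> {..<n}" "y \<in> T" "z \<in> T" "y \<noteq> z"
  shows "v i T \<le> v i (T - {y}) + v i (T - {z})"
proof -
  have "v i (insert y (T - {y})) - v i (T - {y}) \<le> v i (insert y (T - {y, z})) - v i (T - {y, z})"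
    by (rule val_marginal_antimono) (use assms in auto)
  moreover have "insert y (T - {y}) = T" "insert y (T - {y, z}) = T - {z}"
    using assms by auto
  moreover have "0 \<le> v i (T - {y, z})"
    using assms by (intro val_nonneg) auto
  ultimately show ?thesis
    by simp
qed

definition top_low :: "nat set \<Rightarrow> nat" where
  "top_low T = arg_max_on (\<lambda>i. v i T) ({..<n} - T)"

definition top_high :: "nat set \<Rightarrow> nat" where
  "top_high T = arg_max_on (\<lambda>i. v i T) T"

definition top_high_value :: "nat set \<Rightarrow> real" where
  "top_high_value T = (if T = {} then 0 else v (top_high T) T)"

lemma top_low_in: "{..<n} - T \<noteq> {} \<Longrightarrow> top_low T \<in> {..<n} - T"
  unfolding top_low_def using arg_max_on_finite[of "{..<n} - T" "\<lambda>i. v i T"] by simp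

lemma top_low_max: "k < n \<Longrightarrow> k \<notin> T \<Longrightarrow> v k T \<le> v (top_low T) T"
  unfolding top_low_def using arg_max_on_finite[of "{..<n} - T" "\<lambda>i. v i T"] by blast

lemma top_high_in: "finite T \<Longrightarrow> T \<noteq> {} \<Longrightarrow> top_high T \<in> T"
  unfolding top_high_def using arg_max_on_finite[of T "\<lambda>i. v i T"] by simp

lemma top_high_value_ge: "finite T \<Longrightarrow> k \<in> T \<Longrightarrow> v k T \<le> top_high_value T"
  unfolding top_high_value_def top_high_def using arg_max_on_finite[of T "\<lambda>i. v i T"] by auto

lemma top_high_value_nonneg: "T \<subseteq> {..<n} \<Longrightarrow> 0 \<le> top_high_value T"
  unfolding top_high_value_def using top_high_in[of T] finite_subset[of T "{..<n}"]
  by (auto intro: val_nonneg)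

definition serves_low_cond :: "nat set \<Rightarrow> nat set \<Rightarrow> bool" where
  "serves_low_cond T R \<longleftrightarrow> {..<n} - T \<noteq> {} \<and> card R \<le> 1 \<and>
     (2 - real (card R)) * top_high_value T + (\<Sum>i\<in>R. v i T) < v (top_low T) T"

text \<open>Whether the top low bidder is served depends on the promoted bidders, which are defined
  through the profiles with one high signal less; hence the recursion on the number of high
  signals.\<close>

primrec serves_low_depth :: "nat \<Rightarrow> nat set \<Rightarrow> bool" where
  "serves_low_depth 0 T = serves_low_cond T {}"
| "serves_low_depth (Suc k) T =
     serves_low_cond T {i \<in> T. serves_low_depth k (T - {i}) \<and> top_low (T - {i}) = i}"

definition serves_low :: "nat set \<Rightarrow> bool" where
  "serves_low T = serves_low_depth (card T) T"

definition promoted :: "nat set \<Rightarrow> nat set" where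
  "promoted T = {i \<in> T. serves_low (T - {i}) \<and> top_low (T - {i}) = i}"

definition residual_share :: "nat set \<Rightarrow> real" where
  "residual_share T = 1 - real (card (promoted T)) / 2 - (if serves_low T then 1/2 else 0)"

definition alloc :: "nat set \<Rightarrow> nat \<Rightarrow> real" where
  "alloc T i = (if serves_low T \<and> top_low T = i then 1/2 else 0)
     + (if i \<in> promoted T then 1/2 else 0)
     + (if T \<noteq> {} \<and> top_high T = i then residual_share T else 0)"

lemma serves_low_iff: "finite T \<Longrightarrow> serves_low T \<longleftrightarrow> serves_low_cond T (promoted T)"
proof (cases "card T")
  case 0
  moreover assume "finite T"
  ultimately show ?thesis
    unfolding serves_low_def promoted_def by simp
next
  case (Suc k)
  moreover assume "finite T"
  ultimately have "card (T - {i}) = k" if "i \<in> T" for i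
    using that by (simp add: card_Diff_singleton)
  then have "{i \<in> T. serves_low_depth k (T - {i}) \<and> top_low (T - {i}) = i} = promoted T"
    unfolding promoted_def serves_low_def by auto
  then show ?thesis
    unfolding serves_low_def using Suc by simp
qed

lemma promoted_subset: "promoted T \<subseteq> T"
  unfolding promoted_def by auto

lemma sum_promoted_nonneg: "T \<subseteq> {..<n} \<Longrightarrow> 0 \<le> (\<Sum>i\<in>promoted T. v i T)"
  using promoted_subset by (intro sum_nonneg val_nonneg) auto

lemma serves_low_top_low_in: "finite T \<Longrightarrow> serves_low T \<Longrightarrow> top_low T \<in> {..<n} - T"
  by (intro top_low_in) (simp add: serves_low_iff serves_low_cond_def)

lemma card_promoted_le_one_if_serves: "finite T \<Longrightarrow> serves_low T \<Longrightarrow> card (promoted T) \<le> 1"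
  by (simp add: serves_low_iff serves_low_cond_def)

lemma top_high_value_less_if_serves:
  assumes T: "T \<subseteq> {..<n}" and serves: "serves_low T"
  shows "top_high_value T < v (top_low T) T"
proof -
  have fin: "finite T"
    using T finite_subset by blast
  have "(2 - real (card (promoted T))) * top_high_value T + (\<Sum>i\<in>promoted T. v i T) < v (top_low T) T"
    using serves serves_low_iff[OF fin] unfolding serves_low_cond_def by blast
  moreover have "top_high_value T \<le> (2 - real (card (promoted T))) * top_high_value T"
    using card_promoted_le_one_if_serves[OF fin serves] top_high_value_nonneg[OF T]
    by (simp add: mult_le_cancel_right1)
  ultimately show ?thesis
    using sum_promoted_nonneg[OF T] by linarith
qed

lemma promoted_dominates:
  assumes T: "T \<subseteq> {..<n}" and x: "x \<in> promoted T" and k: "k < n"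
  shows "v k (T - {x}) \<le> v x (T - {x})"
proof -
  have serves: "serves_low (T - {x})" and top: "top_low (T - {x}) = x"
    using x unfolding promoted_def by auto
  show ?thesis
  proof (cases "k \<in> T - {x}")
    case True
    then have "v k (T - {x}) \<le> top_high_value (T - {x})"
      using T finite_subset by (intro top_high_value_ge) auto
    also have "\<dots> < v x (T - {x})"
      using top_high_value_less_if_serves[of "T - {x}"] T serves top by auto
    finally show ?thesis
      by simp
  next
    case False
    then show ?thesis
      using top_low_max[OF k, of "T - {x}"] top by simp
  qed
qed

text \<open>The top low bidder x beats j at T but loses to j once j lowers its signal, so the marginal
  value of j for x exceeds every high value at T; by submodularity it still does after removing k.\<close>

lemma served_top_low_beats_removal:
  assumes T: "T \<subseteq> {..<n}" and serves: "serves_low T" and j: "promoted T = {j}"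
    and k: "k \<in> T" "k \<noteq> j"
  shows "v k T < v (top_low T) (T - {k})"
proof -
  let ?x = "top_low T"
  have fin: "finite T"
    using T finite_subset by blast
  have x: "?x < n" "?x \<notin> T"
    using serves_low_top_low_in[OF fin serves] by auto
  have j_in: "j \<in> T" and j_top: "top_low (T - {j}) = j"
    using j unfolding promoted_def by auto
  have beats: "top_high_value T + v j T < v ?x T"
    using serves serves_low_iff[OF fin] j unfolding serves_low_cond_def by simp
  have "v ?x (T - {j}) \<le> v j (T - {j})"
    using top_low_max[OF x(1), of "T - {j}"] x(2) j_top by simp
  also have "\<dots> \<le> v j T"
    using j_in T by (intro val_mono) auto
  finally have lost: "v ?x (T - {j}) \<le> v j T" .
  have "v ?x (insert j (T - {j})) - v ?x (T - {j}) \<le> v ?x (insert j (T - {k, j})) - v ?x (T - {k, j})"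
    by (rule val_marginal_antimono) (use x(1) j_in T in auto)
  moreover have "insert j (T - {j}) = T" "insert j (T - {k, j}) = T - {k}"
    using j_in k by auto
  moreover have "0 \<le> v ?x (T - {k, j})"
    using x(1) T by (intro val_nonneg) auto
  ultimately show ?thesis
    using top_high_value_ge[OF fin k(1)] beats lost by simp
qed

lemma served_top_low_beats_pair:
  assumes T: "T \<subseteq> {..<n}" and serves: "serves_low T" and y: "y \<in> T" and z: "z \<in> T"
  shows "v y T + v z T < v (top_low T) T \<or>
    (v y T < v (top_low T) (T - {y}) \<and> v z T < v (top_low T) (T - {z}))"
proof -
  have fin: "finite T"
    using T finite_subset by blast
  have cond: "serves_low_cond T (promoted T)"
    using serves serves_low_iff[OF fin] by blast
  have high_le: "v y T \<le> top_high_value T" "v z T \<le> top_high_value T"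
    using top_high_value_ge[OF fin] y z by auto
  have "finite (promoted T)" "card (promoted T) \<le> 1"
    using cond finite_subset[OF promoted_subset fin] unfolding serves_low_cond_def by auto
  then consider "promoted T = {}" | j where "promoted T = {j}"
    by (metis card_0_eq card_1_singletonE le_eq_less_or_eq less_one)
  then show ?thesis
  proof cases
    case 1
    then have "2 * top_high_value T < v (top_low T) T"
      using cond unfolding serves_low_cond_def by simp
    then show ?thesis
      using high_le by auto
  next
    case (2 j)
    then have "top_high_value T + v j T < v (top_low T) T"
      using cond unfolding serves_low_cond_def by simp
    then show ?thesis
      using high_le served_top_low_beats_removal[OF T serves 2] y z by force
  qed
qed

lemma promoted_pair_bound:
  assumes T: "T \<subseteq> {..<n}" and x: "x \<in> promoted T"
    and y: "y \<in> T - {x}" and z: "z \<in> T - {x}" and "y \<noteq> z"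
  shows "v y (T - {x}) + v z (T - {x}) < v x (T - {y}) + v x (T - {z})"
proof -
  define T' where "T' = T - {x}"
  have T': "T' \<subseteq> {..<n}" and xn: "x < n"
    using T x promoted_subset unfolding T'_def by auto
  have serves: "serves_low T'" and top: "top_low T' = x"
    using x unfolding promoted_def T'_def by auto
  have y': "y \<in> T'" and z': "z \<in> T'"
    using y z unfolding T'_def .
  have "v x T' \<le> v x (T' - {y}) + v x (T' - {z})"
    using val_le_two_removals[OF xn T' y' z' \<open>y \<noteq> z\<close>] .
  moreover have "v x (T' - {y}) \<le> v x (T - {y})" "v x (T' - {z}) \<le> v x (T - {z})"
    using xn T unfolding T'_def by (auto intro: val_mono)
  moreover note served_top_low_beats_pair[OF T' serves y' z', unfolded top]
  ultimately have "v y T' + v z T' < v x (T - {y}) + v x (T - {z})"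
    by linarith
  then show ?thesis
    unfolding T'_def .
qed

text \<open>Summing the pair bounds of three promoted bidders over all three gives the same
  quantity on both sides.\<close>

lemma card_promoted_le_two:
  assumes T: "T \<subseteq> {..<n}"
  shows "card (promoted T) \<le> 2"
proof (rule ccontr)
  assume "\<not> card (promoted T) \<le> 2"
  then obtain P where "P \<subseteq> promoted T" "card P = 3"
    using obtain_subset_with_card_n[of 3 "promoted T"] by auto
  then obtain a b c where abc: "a \<in> promoted T" "b \<in> promoted T" "c \<in> promoted T"
    and "a \<noteq> b" "b \<noteq> c" "a \<noteq> c"
    by (auto simp: card_3_iff)
  then have "a \<in> T" "b \<in> T" "c \<in> T"
    using promoted_subset by auto
  then have "v b (T - {a}) + v c (T - {a}) < v a (T - {b}) + v a (T - {c})"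
    "v a (T - {b}) + v c (T - {b}) < v b (T - {a}) + v b (T - {c})"
    "v a (T - {c}) + v b (T - {c}) < v c (T - {a}) + v c (T - {b})"
    using promoted_pair_bound[OF T] abc \<open>a \<noteq> b\<close> \<open>b \<noteq> c\<close> \<open>a \<noteq> c\<close> by auto
  then show False
    by linarith
qed

lemma two_promoted_cover:
  assumes T: "T \<subseteq> {..<n}" and ab: "promoted T = {a, b}" "a \<noteq> b" and k: "k < n"
  shows "v k T \<le> v a T + v b T"
proof -
  have "a \<in> T" "b \<in> T"
    using ab promoted_subset by auto
  then have "v k T \<le> v k (T - {a}) + v k (T - {b})"
    using val_le_two_removals[OF k T] ab(2) by blast
  also have "\<dots> \<le> v a (T - {a}) + v b (T - {b})"
    using promoted_dominates[OF T _ k] ab(1) by (intro add_mono) auto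
  also have "\<dots> \<le> v a T + v b T"
    using T \<open>a \<in> T\<close> \<open>b \<in> T\<close> by (intro add_mono val_mono) auto
  finally show ?thesis .
qed

lemma residual_share_nonneg:
  assumes T: "T \<subseteq> {..<n}"
  shows "0 \<le> residual_share T"
proof -
  have fin: "finite T"
    using T finite_subset by blast
  show ?thesis
    using card_promoted_le_two[OF T] card_promoted_le_one_if_serves[OF fin]
    unfolding residual_share_def by (cases "serves_low T") simp_all
qed

lemma alloc_nonneg: "T \<subseteq> {..<n} \<Longrightarrow> 0 \<le> alloc T i"
  unfolding alloc_def using residual_share_nonneg[of T] by (intro add_nonneg_nonneg) auto

lemma alloc_lower_own_signal:
  assumes T: "T \<subseteq> {..<n}" and i: "i \<in> T"
  shows "alloc (T - {i}) i \<le> alloc T i"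
proof -
  have fin: "finite (T - {i})"
    using T finite_subset by blast
  have "i \<notin> promoted (T - {i})"
    using promoted_subset by blast
  moreover have "\<not> (T - {i} \<noteq> {} \<and> top_high (T - {i}) = i)"
    using top_high_in[OF fin] by auto
  moreover have "i \<in> promoted T \<longleftrightarrow> serves_low (T - {i}) \<and> top_low (T - {i}) = i"
    unfolding promoted_def using i by simp
  ultimately have "alloc (T - {i}) i = (if i \<in> promoted T then 1/2 else 0)"
    unfolding alloc_def by auto
  also have "\<dots> \<le> alloc T i"
    unfolding alloc_def using residual_share_nonneg[OF T] by simp
  finally show ?thesis .
qed

lemma sum_alloc_weighted:
  assumes T: "T \<subseteq> {..<n}"
  shows "(\<Sum>i<n. alloc T i * w i) = (if serves_low T then w (top_low T) / 2 else 0)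
    + (\<Sum>i\<in>promoted T. w i) / 2 + (if T = {} then 0 else residual_share T * w (top_high T))"
proof -
  have fin: "finite T"
    using T finite_subset by blast
  have "alloc T i * w i = (if i = top_low T then (if serves_low T then w i / 2 else 0) else 0)
      + (if i \<in> promoted T then w i / 2 else 0)
      + (if i = top_high T then (if T = {} then 0 else residual_share T * w i) else 0)" for i
    unfolding alloc_def by (auto simp: algebra_simps)
  moreover have "(\<Sum>i<n. if i = top_low T then (if serves_low T then w i / 2 else 0) else 0)
      = (if serves_low T then w (top_low T) / 2 else 0)"
    using serves_low_top_low_in[OF fin] by (simp add: sum.delta)
  moreover have "(\<Sum>i<n. if i \<in> promoted T then w i / 2 else 0) = (\<Sum>i\<in>promoted T. w i) / 2"
  proof -
    have "{..<n} \<inter> promoted T = promoted T"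
      using promoted_subset T by blast
    then show ?thesis
      using sum.inter_restrict[of "{..<n}" "\<lambda>i. w i / 2" "promoted T"]
      by (simp add: sum_divide_distrib)
  qed
  moreover have "(\<Sum>i<n. if i = top_high T then (if T = {} then 0 else residual_share T * w i) else 0)
      = (if T = {} then 0 else residual_share T * w (top_high T))"
    using top_high_in[OF fin] T by (auto simp: sum.delta)
  ultimately show ?thesis
    by (simp add: sum.distrib)
qed

lemma sum_alloc_le_one:
  assumes T: "T \<subseteq> {..<n}"
  shows "(\<Sum>i<n. alloc T i) \<le> 1"
  using sum_alloc_weighted[OF T, of "\<lambda>_. 1"] residual_share_nonneg[OF T]
  unfolding residual_share_def by (auto split: if_splits)

lemma twice_welfare_eq:
  assumes T: "T \<subseteq> {..<n}"
  shows "2 * (\<Sum>i<n. alloc T i * v i T) = (if serves_low T then v (top_low T) T else 0)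
    + (\<Sum>i\<in>promoted T. v i T) + 2 * residual_share T * top_high_value T"
  using sum_alloc_weighted[OF T, of "\<lambda>i. v i T"] unfolding top_high_value_def
  by (simp add: algebra_simps)

lemma welfare_two_approx_served:
  assumes T: "T \<subseteq> {..<n}" and serves: "serves_low T" and k: "k < n"
  shows "v k T \<le> 2 * (\<Sum>i<n. alloc T i * v i T)"
proof -
  have fin: "finite T"
    using T finite_subset by blast
  have "v k T \<le> v (top_low T) T"
    using top_high_value_ge[OF fin, of k] top_high_value_less_if_serves[OF T serves]
      top_low_max[OF k] by (cases "k \<in> T") auto
  moreover have "0 \<le> residual_share T * top_high_value T"
    using top_high_value_nonneg[OF T] residual_share_nonneg[OF T] by simp
  ultimately show ?thesis
    unfolding twice_welfare_eq[OF T] using serves sum_promoted_nonneg[OF T] by simp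
qed

lemma welfare_two_approx_unserved:
  assumes T: "T \<subseteq> {..<n}" and unserved: "\<not> serves_low T" and k: "k < n"
  shows "v k T \<le> 2 * (\<Sum>i<n. alloc T i * v i T)"
proof -
  let ?H = "top_high_value T" and ?R = "promoted T"
  have fin: "finite T"
    using T finite_subset by blast
  have welfare: "2 * (\<Sum>i<n. alloc T i * v i T) = (2 - real (card ?R)) * ?H + (\<Sum>i\<in>?R. v i T)"
    unfolding twice_welfare_eq[OF T] residual_share_def using unserved by (simp add: algebra_simps)
  consider "card ?R = 2" | "card ?R \<le> 1"
    using card_promoted_le_two[OF T] by linarith
  then show ?thesis
  proof cases
    case 1
    then obtain a b where "?R = {a, b}" "a \<noteq> b"
      by (auto simp: card_2_iff)
    then show ?thesis
      unfolding welfare using 1 two_promoted_cover[OF T _ _ k] by simp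
  next
    case 2
    then have "?H \<le> (2 - real (card ?R)) * ?H"
      using top_high_value_nonneg[OF T] by (simp add: mult_le_cancel_right1)
    moreover have "v k T \<le> ?H" if "k \<in> T"
      using top_high_value_ge[OF fin that] .
    moreover have "v k T \<le> v (top_low T) T" "v (top_low T) T \<le> (2 - real (card ?R)) * ?H + (\<Sum>i\<in>?R. v i T)"
      if "k \<notin> T"
      using that unserved 2 k top_low_max[OF k] serves_low_iff[OF fin]
      unfolding serves_low_cond_def by auto
    ultimately show ?thesis
      unfolding welfare using sum_promoted_nonneg[OF T] by (cases "k \<in> T") auto
  qed
qed

end

theorem theorem1:
  fixes n :: nat and v :: "nat \<Rightarrow> nat set \<Rightarrow> real"
  assumes "n \<ge> 1" and "valid_SOS n v"
  shows "\<exists>x p. feasible n x \<and> expost_IC_IR n v x p \<and>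
    (\<forall>S. S \<subseteq> {..<n} \<longrightarrow> (\<Sum>i<n. x S i * v i S) \<ge> (1/2) * (MAX i\<in>{..<n}. v i S))"
proof -
  interpret SOS_auction n v
    using assms(2) by unfold_locales
  have "feasible n alloc"
    unfolding feasible_def using alloc_nonneg sum_alloc_le_one by blast
  moreover have "expost_IC_IR n v alloc (\<lambda>S i. alloc S i * v i (S - {i}))"
    using val_monotone alloc_nonneg alloc_lower_own_signal
    by (intro expost_IC_IR_threshold_payment) auto
  moreover have "(1/2) * (MAX i\<in>{..<n}. v i S) \<le> (\<Sum>i<n. alloc S i * v i S)"
    if "S \<subseteq> {..<n}" for S
  proof -
    have "(MAX i\<in>{..<n}. v i S) \<le> 2 * (\<Sum>i<n. alloc S i * v i S)"
      using welfare_two_approx_served[OF that] welfare_two_approx_unserved[OF that] assms(1)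
      by (subst Max_le_iff) (auto simp: lessThan_empty_iff)
    then show ?thesis
      by simp
  qed
  ultimately show ?thesis
    by blast
qed

end
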